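(* Let $(G,\cdot,D,\star)$ be an invariant probabilistic metric group with identity $e$, where $\star$ is sup-continuous. Then $Lip^1_\star(G,\Delta^+)$ is closed under $\odot$, and $(Lip^1_\star(G,\Delta^+),\odot)$ is a monoid with identity element $\delta_e$. Moreover, the map $\delta:(G,\cdot)\to(Lip^1_\star(G,\Delta^+),\odot)$, $a\mapsto\delta_a$, is an injective homomorphism.
   Context: A distribution function is a nondecreasing, left-continuous function $F:[-\infty,+\infty]\to[0,1]$ with $F(-\infty)=0$, $F(+\infty)=1$; $\Delta^+$ is the set of distribution functions with $F(0)=0$, ordered pointwise; $(\Delta^+,\le)$ is a complete lattice with maximum $\mathcal H_0$ ($\mathcal H_0(t)=0$ for $t\le0$, $1$ for $t>0$). A triangle function is a binary operation $\star$ on $\Delta^+$ that is commutative, associative, nondecreasing in each argument, with $F\star\mathcal H_0=F$; it is sup-continuous if $\sup_{i\in I}(F_i\star L)=(\sup_{i\in I}F_i)\star L$ for every nonempty family $(F_i)$ and every $L$. A probabilistic metric space $(G,D,\star)$ consists of a set $G$, a triangle function $\star$ and $D:G\times G\to\Delta^+$ with (i) $D(p,q)=\mathcal H_0$ iff $p=q$; (ii) $D(p,q)=D(q,p)$; (iii) $D(p,q)\star D(q,r)\le D(p,r)$. If $(G,\cdot)$ is a group and $D(pr,qr)=D(rp,rq)=D(p,q)$ for all $p,q,r$, it is an invariant probabilistic metric group. $Lip^1_\star(G,\Delta^+)$ is the set of maps $f:G\to\Delta^+$ with $D(x,y)\star f(y)\le f(x)$ for all $x,y$. $\delta_a(y)=D(y,a)$.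 For maps $f,g:G\to\Delta^+$, $(f\odot g)(x)=\sup_{y,z\in G,\ yz=x}f(y)\star g(z)$. *)

theory Defs
  imports "HOL-Analysis.Analysis" "HOL-Algebra.Group" "HOL-Library.FuncSet"
begin

type_synonym distf = "ereal \<Rightarrow> real"

definition distribution_function :: "distf \<Rightarrow> bool" where
  "distribution_function F \<longleftrightarrow>
     mono F \<and> (\<forall>t. 0 \<le> F t \<and> F t \<le> 1) \<and>
     (\<forall>x. (F \<longlongrightarrow> F x) (at_left x)) \<and>
     F (-\<infinity>) = 0 \<and> F \<infinity> = 1"

definition Delta_plus :: "distf set" where
  "Delta_plus = {F. distribution_function F \<and> F 0 = 0}"

definition H0 :: distf where
  "H0 = (\<lambda>t. if t \<le> 0 then 0 else 1)"

definition dsup :: "distf set \<Rightarrow> distf" where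
  "dsup A = (\<lambda>t. SUP F\<in>A. F t)"

definition triangle_function :: "(distf \<Rightarrow> distf \<Rightarrow> distf) \<Rightarrow> bool" where
  "triangle_function T \<longleftrightarrow>
     (\<forall>F\<in>Delta_plus. \<forall>G\<in>Delta_plus. T F G \<in> Delta_plus) \<and>
     (\<forall>F\<in>Delta_plus. \<forall>G\<in>Delta_plus. T F G = T G F) \<and>
     (\<forall>F\<in>Delta_plus. \<forall>G\<in>Delta_plus. \<forall>H\<in>Delta_plus. T (T F G) H = T F (T G H)) \<and>
     (\<forall>F\<in>Delta_plus. \<forall>G\<in>Delta_plus. \<forall>H\<in>Delta_plus. F \<le> G \<longrightarrow> T F H \<le> T G H) \<and>
     (\<forall>F\<in>Delta_plus. \<forall>G\<in>Delta_plus. \<forall>H\<in>Delta_plus. F \<le> G \<longrightarrow> T H F \<le> T H G) \<and>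
     (\<forall>F\<in>Delta_plus. T F H0 = F)"

definition tf_sup_continuous :: "(distf \<Rightarrow> distf \<Rightarrow> distf) \<Rightarrow> bool" where
  "tf_sup_continuous T \<longleftrightarrow>
     (\<forall>A L. A \<noteq> {} \<longrightarrow> A \<subseteq> Delta_plus \<longrightarrow> L \<in> Delta_plus \<longrightarrow>
        dsup ((\<lambda>F. T F L) ` A) = T (dsup A) L)"

definition pm_space :: "'a set \<Rightarrow> ('a \<Rightarrow> 'a \<Rightarrow> distf) \<Rightarrow> (distf \<Rightarrow> distf \<Rightarrow> distf) \<Rightarrow> bool" where
  "pm_space S D T \<longleftrightarrow>
     triangle_function T \<and>
     (\<forall>p\<in>S. \<forall>q\<in>S. D p q \<in> Delta_plus) \<and>
     (\<forall>p\<in>S. \<forall>q\<in>S. D p q = H0 \<longleftrightarrow> p = q) \<and>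
     (\<forall>p\<in>S. \<forall>q\<in>S. D p q = D q p) \<and>
     (\<forall>p\<in>S. \<forall>q\<in>S. \<forall>r\<in>S. T (D p q) (D q r) \<le> D p r)"

definition invariant_pm_group ::
  "('a, 'b) monoid_scheme \<Rightarrow> ('a \<Rightarrow> 'a \<Rightarrow> distf) \<Rightarrow> (distf \<Rightarrow> distf \<Rightarrow> distf) \<Rightarrow> bool" where
  "invariant_pm_group G D T \<longleftrightarrow>
     group G \<and> pm_space (carrier G) D T \<and>
     (\<forall>p\<in>carrier G. \<forall>q\<in>carrier G. \<forall>r\<in>carrier G.
        D (p \<otimes>\<^bsub>G\<^esub> r) (q \<otimes>\<^bsub>G\<^esub> r) = D p q \<and> D (r \<otimes>\<^bsub>G\<^esub> p) (r \<otimes>\<^bsub>G\<^esub> q) = D p q)"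

text \<open>Maps G -> Delta_plus are represented extensionally (undefined outside the carrier).\<close>
definition Lip1 ::
  "('a, 'b) monoid_scheme \<Rightarrow> ('a \<Rightarrow> 'a \<Rightarrow> distf) \<Rightarrow> (distf \<Rightarrow> distf \<Rightarrow> distf) \<Rightarrow> ('a \<Rightarrow> distf) set" where
  "Lip1 G D T = {f \<in> carrier G \<rightarrow>\<^sub>E Delta_plus.
      \<forall>x\<in>carrier G. \<forall>y\<in>carrier G. T (D x y) (f y) \<le> f x}"

definition pdelta :: "('a, 'b) monoid_scheme \<Rightarrow> ('a \<Rightarrow> 'a \<Rightarrow> distf) \<Rightarrow> 'a \<Rightarrow> ('a \<Rightarrow> distf)" where
  "pdelta G D a = (\<lambda>y\<in>carrier G. D y a)"

definition pconv ::
  "('a, 'b) monoid_scheme \<Rightarrow> (distf \<Rightarrow> distf \<Rightarrow> distf) \<Rightarrow> ('a \<Rightarrow> distf) \<Rightarrow> ('a \<Rightarrow> distf) \<Rightarrow> ('a \<Rightarrow> distf)" where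
  "pconv G T f g = (\<lambda>x\<in>carrier G.
      dsup {T (f y) (g z) | y z. y \<in> carrier G \<and> z \<in> carrier G \<and> y \<otimes>\<^bsub>G\<^esub> z = x})"

definition Lip_monoid ::
  "('a, 'b) monoid_scheme \<Rightarrow> ('a \<Rightarrow> 'a \<Rightarrow> distf) \<Rightarrow> (distf \<Rightarrow> distf \<Rightarrow> distf) \<Rightarrow> ('a \<Rightarrow> distf) monoid" where
  "Lip_monoid G D T = \<lparr>carrier = Lip1 G D T, monoid.mult = pconv G T, one = pdelta G D \<one>\<^bsub>G\<^esub>\<rparr>"

end

theory Submission
  imports Defs
begin

text \<open>
  The convolution of two maps is a supremum of values of the triangle function; sup-continuity
  lets the triangle function be pulled through such suprema, so associativity of the convolution
  reduces to associativity of the group and of the triangle function. Right invariance turns the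
  Lipschitz inequality of a factor into one for the convolution, and invariance of D makes
  \<open>\<delta>\<^sub>e\<close> a two-sided unit and \<open>\<delta>\<^sub>a \<odot> \<delta>\<^sub>b = \<delta>\<^sub>a\<^sub>b\<close>: in each case the supremum is attained at the
  decomposition in which one distance is \<open>H0\<close>, and all other terms are bounded by the triangle
  inequality.
\<close>

subsection \<open>Suprema in \<open>\<Delta>\<^sup>+\<close>\<close>

lemma Delta_plus_bounds: "F \<in> Delta_plus \<Longrightarrow> 0 \<le> F t \<and> F t \<le> 1"
  by (auto simp: Delta_plus_def distribution_function_def)

lemma bdd_above_Delta_plus_values: "A \<subseteq> Delta_plus \<Longrightarrow> bdd_above ((\<lambda>F. F t) ` A)"
  by (rule bdd_aboveI[of _ 1]) (auto dest: Delta_plus_bounds)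

lemma dsup_upper: "A \<subseteq> Delta_plus \<Longrightarrow> F \<in> A \<Longrightarrow> F \<le> dsup A"
  unfolding le_fun_def dsup_def by (auto intro: cSUP_upper bdd_above_Delta_plus_values)

lemma dsup_least: "A \<noteq> {} \<Longrightarrow> (\<And>F. F \<in> A \<Longrightarrow> F \<le> H) \<Longrightarrow> dsup A \<le> H"
  unfolding le_fun_def dsup_def by (auto intro: cSUP_least)

lemma dsup_const:
  assumes "A \<noteq> {}" "\<And>F. F \<in> A \<Longrightarrow> F t = c"
  shows "dsup A t = c"
proof -
  have "dsup A t = (SUP F\<in>A. c)"
    unfolding dsup_def using assms(2) by (rule SUP_cong[OF refl])
  then show ?thesis
    using assms(1) by simp
qed

lemma mono_dsup:
  assumes "A \<noteq> {}" "A \<subseteq> Delta_plus"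
  shows "mono (dsup A)"
proof (rule monoI)
  fix s t :: ereal assume "s \<le> t"
  then have "F s \<le> F t" if "F \<in> A" for F
    using that assms(2) by (auto simp: Delta_plus_def distribution_function_def mono_def)
  then show "dsup A s \<le> dsup A t"
    unfolding dsup_def by (intro cSUP_mono[OF assms(1) bdd_above_Delta_plus_values[OF assms(2)]]) auto
qed

text \<open>
  From below, a supremum of left-continuous functions is approximated by one of its members;
  from above, monotonicity suffices.
\<close>
lemma dsup_left_continuous:
  assumes "A \<noteq> {}" "A \<subseteq> Delta_plus"
  shows "(dsup A \<longlongrightarrow> dsup A x) (at_left x)"
proof (rule order_tendstoI)
  fix a assume "a < dsup A x"
  then obtain F where F: "F \<in> A" "a < F x"
    unfolding dsup_def using less_cSUP_iff[OF assms(1) bdd_above_Delta_plus_values[OF assms(2)]] by blast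
  have "(F \<longlongrightarrow> F x) (at_left x)"
    using F(1) assms(2) by (auto simp: Delta_plus_def distribution_function_def)
  then have "eventually (\<lambda>t. a < F t) (at_left x)"
    using F(2) by (rule order_tendstoD)
  then show "eventually (\<lambda>t. a < dsup A t) (at_left x)"
    by (rule eventually_mono)
       (use dsup_upper[OF assms(2) F(1)] in \<open>auto simp: le_fun_def intro: less_le_trans\<close>)
next
  fix a assume "dsup A x < a"
  have "eventually (\<lambda>t. t < x) (at_left x)"
    by (simp add: eventually_at_filter)
  then show "eventually (\<lambda>t. dsup A t < a) (at_left x)"
    by (rule eventually_mono) (use \<open>dsup A x < a\<close> mono_dsup[OF assms] in \<open>meson le_less_trans less_imp_le monoD\<close>)
qed

lemma dsup_in_Delta_plus:
  assumes "A \<noteq> {}" "A \<subseteq> Delta_plus"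
  shows "dsup A \<in> Delta_plus"
proof -
  obtain F where F: "F \<in> A" using assms(1) by auto
  have "0 \<le> dsup A t" for t
    using Delta_plus_bounds[of F t] dsup_upper[OF assms(2) F] F assms(2)
    by (auto simp: le_fun_def intro: order_trans)
  moreover have "dsup A t \<le> 1" for t
    unfolding dsup_def using assms Delta_plus_bounds by (intro cSUP_least) auto
  moreover have "dsup A (-\<infinity>) = 0" "dsup A \<infinity> = 1" "dsup A 0 = 0"
    using assms by (auto intro!: dsup_const simp: Delta_plus_def distribution_function_def)
  ultimately show ?thesis
    using mono_dsup[OF assms] dsup_left_continuous[OF assms]
    by (auto simp: Delta_plus_def distribution_function_def)
qed

locale sup_continuous_triangle =
  fixes T :: "distf \<Rightarrow> distf \<Rightarrow> distf"
  assumes triangle: "triangle_function T"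
    and sup_continuous: "tf_sup_continuous T"
begin

lemma T_closed: "F \<in> Delta_plus \<Longrightarrow> H \<in> Delta_plus \<Longrightarrow> T F H \<in> Delta_plus"
  using triangle by (simp add: triangle_function_def)

lemma T_commute: "F \<in> Delta_plus \<Longrightarrow> H \<in> Delta_plus \<Longrightarrow> T F H = T H F"
  using triangle by (simp add: triangle_function_def)

lemma T_assoc:
  "F \<in> Delta_plus \<Longrightarrow> H \<in> Delta_plus \<Longrightarrow> K \<in> Delta_plus \<Longrightarrow> T (T F H) K = T F (T H K)"
  using triangle unfolding triangle_function_def by blast

lemma T_mono_left:
  "F \<in> Delta_plus \<Longrightarrow> H \<in> Delta_plus \<Longrightarrow> K \<in> Delta_plus \<Longrightarrow> F \<le> H \<Longrightarrow> T F K \<le> T H K"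
  using triangle by (simp add: triangle_function_def)

lemma T_mono_right:
  "F \<in> Delta_plus \<Longrightarrow> H \<in> Delta_plus \<Longrightarrow> K \<in> Delta_plus \<Longrightarrow> F \<le> H \<Longrightarrow> T K F \<le> T K H"
  using triangle by (simp add: triangle_function_def)

lemma T_H0: "F \<in> Delta_plus \<Longrightarrow> T F H0 = F"
  using triangle by (simp add: triangle_function_def)

lemma T_dsup_left_le:
  assumes "A \<noteq> {}" "A \<subseteq> Delta_plus" "L \<in> Delta_plus" "\<And>F. F \<in> A \<Longrightarrow> T F L \<le> H"
  shows "T (dsup A) L \<le> H"
proof -
  have "T (dsup A) L = dsup ((\<lambda>F. T F L) ` A)"
    using sup_continuous assms by (simp add: tf_sup_continuous_def)
  also have "\<dots> \<le> H"
    using assms by (intro dsup_least) auto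
  finally show ?thesis .
qed

lemma T_dsup_right_le:
  assumes "A \<noteq> {}" "A \<subseteq> Delta_plus" "L \<in> Delta_plus" "\<And>F. F \<in> A \<Longrightarrow> T L F \<le> H"
  shows "T L (dsup A) \<le> H"
  using T_dsup_left_le[OF assms(1-3)] assms T_commute dsup_in_Delta_plus by (metis subsetD)

end

subsection \<open>Convolution of \<open>\<Delta>\<^sup>+\<close>-valued maps on a monoid\<close>

definition conv_terms ::
  "('a, 'b) monoid_scheme \<Rightarrow> (distf \<Rightarrow> distf \<Rightarrow> distf) \<Rightarrow> ('a \<Rightarrow> distf) \<Rightarrow> ('a \<Rightarrow> distf) \<Rightarrow> 'a \<Rightarrow> distf set"
  where "conv_terms G T f g x =
    {T (f y) (g z) | y z. y \<in> carrier G \<and> z \<in> carrier G \<and> y \<otimes>\<^bsub>G\<^esub> z = x}"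

lemma pconv_apply: "x \<in> carrier G \<Longrightarrow> pconv G T f g x = dsup (conv_terms G T f g x)"
  by (simp add: pconv_def conv_terms_def)

lemma pconv_extensional: "pconv G T f g \<in> extensional (carrier G)"
  by (simp add: pconv_def)

locale monoid_convolution = monoid G + sup_continuous_triangle T
  for G :: "('a, 'b) monoid_scheme" (structure) and T
begin

lemma conv_terms_nonempty: "x \<in> carrier G \<Longrightarrow> conv_terms G T f g x \<noteq> {}"
  unfolding conv_terms_def using r_one[of x] one_closed by blast

lemma conv_terms_subset:
  "f \<in> carrier G \<rightarrow> Delta_plus \<Longrightarrow> g \<in> carrier G \<rightarrow> Delta_plus \<Longrightarrow> conv_terms G T f g x \<subseteq> Delta_plus"
  unfolding conv_terms_def by (auto intro: T_closed)

lemma pconv_funcset: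
  "f \<in> carrier G \<rightarrow> Delta_plus \<Longrightarrow> g \<in> carrier G \<rightarrow> Delta_plus \<Longrightarrow> pconv G T f g \<in> carrier G \<rightarrow> Delta_plus"
  by (simp add: pconv_apply dsup_in_Delta_plus conv_terms_nonempty conv_terms_subset)

lemma pconv_upper:
  assumes "f \<in> carrier G \<rightarrow> Delta_plus" "g \<in> carrier G \<rightarrow> Delta_plus" "y \<in> carrier G" "z \<in> carrier G"
  shows "T (f y) (g z) \<le> pconv G T f g (y \<otimes> z)"
proof -
  have "T (f y) (g z) \<in> conv_terms G T f g (y \<otimes> z)"
    using assms unfolding conv_terms_def by blast
  then show ?thesis
    using assms by (simp add: pconv_apply dsup_upper conv_terms_subset)
qed

lemma pconv_least:
  assumes "x \<in> carrier G"
    and "\<And>y z. y \<in> carrier G \<Longrightarrow> z \<in> carrier G \<Longrightarrow> y \<otimes> z = x \<Longrightarrow> T (f y) (g z) \<le> H"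
  shows "pconv G T f g x \<le> H"
  unfolding pconv_apply[OF assms(1)]
  by (rule dsup_least[OF conv_terms_nonempty[OF assms(1)]]) (use assms(2) in \<open>auto simp: conv_terms_def\<close>)

lemma T_pconv_left_le:
  assumes "f \<in> carrier G \<rightarrow> Delta_plus" "g \<in> carrier G \<rightarrow> Delta_plus" "x \<in> carrier G" "L \<in> Delta_plus"
    and "\<And>y z. y \<in> carrier G \<Longrightarrow> z \<in> carrier G \<Longrightarrow> y \<otimes> z = x \<Longrightarrow> T (T (f y) (g z)) L \<le> H"
  shows "T (pconv G T f g x) L \<le> H"
  unfolding pconv_apply[OF assms(3)]
  by (rule T_dsup_left_le[OF conv_terms_nonempty[OF assms(3)] conv_terms_subset[OF assms(1,2)] assms(4)])
     (use assms(5) in \<open>auto simp: conv_terms_def\<close>)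

lemma T_pconv_right_le:
  assumes "f \<in> carrier G \<rightarrow> Delta_plus" "g \<in> carrier G \<rightarrow> Delta_plus" "x \<in> carrier G" "L \<in> Delta_plus"
    and "\<And>y z. y \<in> carrier G \<Longrightarrow> z \<in> carrier G \<Longrightarrow> y \<otimes> z = x \<Longrightarrow> T L (T (f y) (g z)) \<le> H"
  shows "T L (pconv G T f g x) \<le> H"
  unfolding pconv_apply[OF assms(3)]
  by (rule T_dsup_right_le[OF conv_terms_nonempty[OF assms(3)] conv_terms_subset[OF assms(1,2)] assms(4)])
     (use assms(5) in \<open>auto simp: conv_terms_def\<close>)

lemma pconv_assoc_le:
  assumes f: "f \<in> carrier G \<rightarrow> Delta_plus" and g: "g \<in> carrier G \<rightarrow> Delta_plus"
    and h: "h \<in> carrier G \<rightarrow> Delta_plus" and x: "x \<in> carrier G"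
  shows "pconv G T (pconv G T f g) h x \<le> pconv G T f (pconv G T g h) x"
proof (rule pconv_least[OF x])
  fix y z assume y: "y \<in> carrier G" and z: "z \<in> carrier G" and yz: "y \<otimes> z = x"
  show "T (pconv G T f g y) (h z) \<le> pconv G T f (pconv G T g h) x"
  proof (rule T_pconv_left_le[OF f g y])
    show "h z \<in> Delta_plus" using h z by auto
    fix a b assume a: "a \<in> carrier G" and b: "b \<in> carrier G" and ab: "a \<otimes> b = y"
    have vals: "f a \<in> Delta_plus" "g b \<in> Delta_plus" "h z \<in> Delta_plus"
      "pconv G T g h (b \<otimes> z) \<in> Delta_plus"
      using f g h a b z pconv_funcset[OF g h] by auto
    have "T (T (f a) (g b)) (h z) = T (f a) (T (g b) (h z))"
      using T_assoc vals by simp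
    also have "\<dots> \<le> T (f a) (pconv G T g h (b \<otimes> z))"
      using T_mono_right T_closed vals pconv_upper[OF g h b z] by blast
    also have "\<dots> \<le> pconv G T f (pconv G T g h) (a \<otimes> (b \<otimes> z))"
      using pconv_upper[OF f pconv_funcset[OF g h] a] b z by simp
    also have "a \<otimes> (b \<otimes> z) = x"
      using a b z ab yz by (metis m_assoc)
    finally show "T (T (f a) (g b)) (h z) \<le> pconv G T f (pconv G T g h) x" .
  qed
qed

lemma pconv_assoc:
  assumes f: "f \<in> carrier G \<rightarrow> Delta_plus" and g: "g \<in> carrier G \<rightarrow> Delta_plus"
    and h: "h \<in> carrier G \<rightarrow> Delta_plus"
  shows "pconv G T (pconv G T f g) h = pconv G T f (pconv G T g h)"
proof (rule extensionalityI[OF pconv_extensional pconv_extensional], rule antisym)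
  fix x assume x: "x \<in> carrier G"
  show "pconv G T (pconv G T f g) h x \<le> pconv G T f (pconv G T g h) x"
    using pconv_assoc_le[OF f g h x] .
  show "pconv G T f (pconv G T g h) x \<le> pconv G T (pconv G T f g) h x"
  proof (rule pconv_least[OF x])
    fix a w assume a: "a \<in> carrier G" and w: "w \<in> carrier G" and aw: "a \<otimes> w = x"
    show "T (f a) (pconv G T g h w) \<le> pconv G T (pconv G T f g) h x"
    proof (rule T_pconv_right_le[OF g h w])
      show "f a \<in> Delta_plus" using f a by auto
      fix b c assume b: "b \<in> carrier G" and c: "c \<in> carrier G" and bc: "b \<otimes> c = w"
      have vals: "f a \<in> Delta_plus" "g b \<in> Delta_plus" "h c \<in> Delta_plus"
        "pconv G T f g (a \<otimes> b) \<in> Delta_plus"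
        using f g h a b c pconv_funcset[OF f g] by auto
      have "T (f a) (T (g b) (h c)) = T (T (f a) (g b)) (h c)"
        using T_assoc vals by simp
      also have "\<dots> \<le> T (pconv G T f g (a \<otimes> b)) (h c)"
        using T_mono_left T_closed vals pconv_upper[OF f g a b] by blast
      also have "\<dots> \<le> pconv G T (pconv G T f g) h ((a \<otimes> b) \<otimes> c)"
        using pconv_upper[OF pconv_funcset[OF f g] h _ c] a b by simp
      also have "(a \<otimes> b) \<otimes> c = x"
        using a b c bc aw by (metis m_assoc)
      finally show "T (f a) (T (g b) (h c)) \<le> pconv G T (pconv G T f g) h x" .
    qed
  qed
qed

end

subsection \<open>Lipschitz maps on an invariant probabilistic metric group\<close>

locale invariant_pm_group_convolution = group G + sup_continuous_triangle T
  for G :: "('a, 'b) monoid_scheme" (structure) and T +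
  fixes D :: "'a \<Rightarrow> 'a \<Rightarrow> distf"
  assumes invariant: "invariant_pm_group G D T"
begin

sublocale monoid_convolution G T ..

lemma D_in_Delta_plus: "p \<in> carrier G \<Longrightarrow> q \<in> carrier G \<Longrightarrow> D p q \<in> Delta_plus"
  using invariant by (simp add: invariant_pm_group_def pm_space_def)

lemma D_eq_H0_iff: "p \<in> carrier G \<Longrightarrow> q \<in> carrier G \<Longrightarrow> D p q = H0 \<longleftrightarrow> p = q"
  using invariant by (simp add: invariant_pm_group_def pm_space_def)

lemma D_triangle:
  "p \<in> carrier G \<Longrightarrow> q \<in> carrier G \<Longrightarrow> r \<in> carrier G \<Longrightarrow> T (D p q) (D q r) \<le> D p r"
  using invariant by (simp add: invariant_pm_group_def pm_space_def)

lemma D_mult_right: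
  "p \<in> carrier G \<Longrightarrow> q \<in> carrier G \<Longrightarrow> r \<in> carrier G \<Longrightarrow> D (p \<otimes> r) (q \<otimes> r) = D p q"
  using invariant by (simp add: invariant_pm_group_def)

lemma D_mult_left:
  "p \<in> carrier G \<Longrightarrow> q \<in> carrier G \<Longrightarrow> r \<in> carrier G \<Longrightarrow> D (r \<otimes> p) (r \<otimes> q) = D p q"
  using invariant by (simp add: invariant_pm_group_def)

lemma Lip1_funcset: "f \<in> Lip1 G D T \<Longrightarrow> f \<in> carrier G \<rightarrow> Delta_plus"
  by (auto simp: Lip1_def)

lemma Lip1_le: "f \<in> Lip1 G D T \<Longrightarrow> x \<in> carrier G \<Longrightarrow> y \<in> carrier G \<Longrightarrow> T (D x y) (f y) \<le> f x"
  by (auto simp: Lip1_def)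

lemma Lip1_extensional: "f \<in> Lip1 G D T \<Longrightarrow> f \<in> extensional (carrier G)"
  by (auto simp: Lip1_def PiE_iff)

lemma pdelta_apply: "y \<in> carrier G \<Longrightarrow> pdelta G D a y = D y a"
  by (simp add: pdelta_def)

lemma pdelta_extensional: "pdelta G D a \<in> extensional (carrier G)"
  by (simp add: pdelta_def)

lemma pdelta_Lip1: "a \<in> carrier G \<Longrightarrow> pdelta G D a \<in> Lip1 G D T"
  unfolding Lip1_def by (auto simp: pdelta_def D_in_Delta_plus D_triangle)

text \<open>
  A term \<open>f a \<star> g b\<close> with \<open>ab = y\<close> is moved to \<open>x\<close> by replacing \<open>a\<close> with \<open>a' = x b\<^sup>-\<^sup>1\<close>;
  right invariance gives \<open>D x y = D a' a\<close>.
\<close>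
lemma pconv_Lip1:
  assumes f: "f \<in> Lip1 G D T" and g: "g \<in> Lip1 G D T"
  shows "pconv G T f g \<in> Lip1 G D T"
proof -
  note fD = Lip1_funcset[OF f] and gD = Lip1_funcset[OF g]
  have "T (D x y) (pconv G T f g y) \<le> pconv G T f g x" if x: "x \<in> carrier G" and y: "y \<in> carrier G" for x y
  proof (rule T_pconv_right_le[OF fD gD y D_in_Delta_plus[OF x y]])
    fix a b assume a: "a \<in> carrier G" and b: "b \<in> carrier G" and ab: "a \<otimes> b = y"
    define a' where "a' = x \<otimes> inv b"
    have a': "a' \<in> carrier G" and a'b: "a' \<otimes> b = x"
      using x b by (simp_all add: a'_def m_assoc)
    have "D x y = D a' a"
      using D_mult_right[OF a' a b] a'b ab by simp
    moreover have vals: "f a \<in> Delta_plus" "g b \<in> Delta_plus" "f a' \<in> Delta_plus"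
      using fD gD a b a' by auto
    ultimately have "T (D x y) (T (f a) (g b)) = T (T (D a' a) (f a)) (g b)"
      using T_assoc D_in_Delta_plus[OF a' a] by simp
    also have "\<dots> \<le> T (f a') (g b)"
      using T_mono_left Lip1_le[OF f a' a] vals T_closed D_in_Delta_plus[OF a' a] by blast
    also have "\<dots> \<le> pconv G T f g x"
      using pconv_upper[OF fD gD a' b] a'b by simp
    finally show "T (D x y) (T (f a) (g b)) \<le> pconv G T f g x" .
  qed
  moreover have "pconv G T f g \<in> carrier G \<rightarrow>\<^sub>E Delta_plus"
    using pconv_funcset[OF fD gD] pconv_extensional by (auto simp: PiE_iff)
  ultimately show ?thesis
    unfolding Lip1_def by blast
qed

lemma pconv_pdelta_one_left:
  assumes f: "f \<in> Lip1 G D T"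
  shows "pconv G T (pdelta G D \<one>) f = f"
proof (rule extensionalityI[OF pconv_extensional Lip1_extensional[OF f]], rule antisym)
  note fD = Lip1_funcset[OF f] and eD = Lip1_funcset[OF pdelta_Lip1[OF one_closed]]
  fix x assume x: "x \<in> carrier G"
  show "pconv G T (pdelta G D \<one>) f x \<le> f x"
  proof (rule pconv_least[OF x])
    fix y z assume y: "y \<in> carrier G" and z: "z \<in> carrier G" and yz: "y \<otimes> z = x"
    have "D y \<one> = D x z"
      using D_mult_right[OF y one_closed z] yz z by simp
    then show "T (pdelta G D \<one> y) (f z) \<le> f x"
      using Lip1_le[OF f x z] y by (simp add: pdelta_apply)
  qed
  have H0: "pdelta G D \<one> \<one> = H0" "H0 \<in> Delta_plus"
    using D_eq_H0_iff[of \<one> \<one>] D_in_Delta_plus[of \<one> \<one>] by (simp_all add: pdelta_apply)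
  have "f x = T (pdelta G D \<one> \<one>) (f x)"
    using H0 funcset_mem[OF fD x] T_H0 T_commute by metis
  also have "\<dots> \<le> pconv G T (pdelta G D \<one>) f (\<one> \<otimes> x)"
    using pconv_upper[OF eD fD one_closed x] .
  finally show "f x \<le> pconv G T (pdelta G D \<one>) f x"
    using x by simp
qed

lemma pconv_pdelta_one_right:
  assumes f: "f \<in> Lip1 G D T"
  shows "pconv G T f (pdelta G D \<one>) = f"
proof (rule extensionalityI[OF pconv_extensional Lip1_extensional[OF f]], rule antisym)
  note fD = Lip1_funcset[OF f] and eD = Lip1_funcset[OF pdelta_Lip1[OF one_closed]]
  fix x assume x: "x \<in> carrier G"
  show "pconv G T f (pdelta G D \<one>) x \<le> f x"
  proof (rule pconv_least[OF x])
    fix y z assume y: "y \<in> carrier G" and z: "z \<in> carrier G" and yz: "y \<otimes> z = x"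
    have "D z \<one> = D x y"
      using D_mult_left[OF z one_closed y] yz y by simp
    then show "T (f y) (pdelta G D \<one> z) \<le> f x"
      using Lip1_le[OF f x y] funcset_mem[OF fD y] z T_commute D_in_Delta_plus[OF x y]
      by (simp add: pdelta_apply)
  qed
  have "f x = T (f x) (pdelta G D \<one> \<one>)"
    using D_eq_H0_iff[of \<one> \<one>] T_H0 funcset_mem[OF fD x] by (simp add: pdelta_apply)
  also have "\<dots> \<le> pconv G T f (pdelta G D \<one>) (x \<otimes> \<one>)"
    using pconv_upper[OF fD eD x one_closed] .
  finally show "f x \<le> pconv G T f (pdelta G D \<one>) x"
    using x by simp
qed

text \<open>
  Upper bound: for \<open>yz = x\<close>, invariance gives \<open>D y a = D x (az)\<close> and \<open>D z b = D (az) (ab)\<close>,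
  so the triangle inequality applies. The bound is attained at \<open>y = x b\<^sup>-\<^sup>1\<close>, \<open>z = b\<close>.
\<close>
lemma pdelta_mult:
  assumes a: "a \<in> carrier G" and b: "b \<in> carrier G"
  shows "pdelta G D (a \<otimes> b) = pconv G T (pdelta G D a) (pdelta G D b)"
proof (rule extensionalityI[OF pdelta_extensional pconv_extensional], rule antisym)
  note aD = Lip1_funcset[OF pdelta_Lip1[OF a]] and bD = Lip1_funcset[OF pdelta_Lip1[OF b]]
  fix x assume x: "x \<in> carrier G"
  show "pconv G T (pdelta G D a) (pdelta G D b) x \<le> pdelta G D (a \<otimes> b) x"
  proof (rule pconv_least[OF x])
    fix y z assume y: "y \<in> carrier G" and z: "z \<in> carrier G" and yz: "y \<otimes> z = x"
    have "D y a = D x (a \<otimes> z)"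
      using D_mult_right[OF y a z] yz by simp
    moreover have "D z b = D (a \<otimes> z) (a \<otimes> b)"
      using D_mult_left[OF z b a] by simp
    ultimately show "T (pdelta G D a y) (pdelta G D b z) \<le> pdelta G D (a \<otimes> b) x"
      using D_triangle[OF x _ _, of "a \<otimes> z" "a \<otimes> b"] a b z x y by (simp add: pdelta_apply)
  qed
  define y where "y = x \<otimes> inv b"
  have y: "y \<in> carrier G" and yb: "y \<otimes> b = x"
    using x b by (simp_all add: y_def m_assoc)
  have "D y a = D x (a \<otimes> b)"
    using D_mult_right[OF y a b] yb by simp
  then have "pdelta G D (a \<otimes> b) x = T (pdelta G D a y) (pdelta G D b b)"
    using D_eq_H0_iff[of b b] b x y T_H0 D_in_Delta_plus[OF y a] by (simp add: pdelta_apply)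
  also have "\<dots> \<le> pconv G T (pdelta G D a) (pdelta G D b) (y \<otimes> b)"
    using pconv_upper[OF aD bD y b] .
  finally show "pdelta G D (a \<otimes> b) x \<le> pconv G T (pdelta G D a) (pdelta G D b) x"
    using yb by simp
qed

lemma inj_on_pdelta: "inj_on (pdelta G D) (carrier G)"
proof (rule inj_onI)
  fix a b assume a: "a \<in> carrier G" and b: "b \<in> carrier G" and ab: "pdelta G D a = pdelta G D b"
  have "D a b = D a a"
    using fun_cong[OF ab, of a] a by (simp add: pdelta_apply)
  then show "a = b"
    using D_eq_H0_iff a b by metis
qed

lemma monoid_Lip_monoid: "monoid (Lip_monoid G D T)"
  by (rule monoidI)
     (auto simp: Lip_monoid_def pconv_Lip1 pdelta_Lip1 pconv_assoc Lip1_funcset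
        pconv_pdelta_one_left pconv_pdelta_one_right)

lemma pdelta_hom: "pdelta G D \<in> hom G (Lip_monoid G D T)"
  by (rule homI) (auto simp: Lip_monoid_def pdelta_Lip1 pdelta_mult)

end

theorem theorem1:
  fixes G :: "('a, 'b) monoid_scheme"
    and D :: "'a \<Rightarrow> 'a \<Rightarrow> distf"
    and T :: "distf \<Rightarrow> distf \<Rightarrow> distf"
  assumes "invariant_pm_group G D T"
    and "tf_sup_continuous T"
  shows "(\<forall>f\<in>Lip1 G D T. \<forall>g\<in>Lip1 G D T. pconv G T f g \<in> Lip1 G D T)
    \<and> monoid (Lip_monoid G D T)
    \<and> \<one>\<^bsub>Lip_monoid G D T\<^esub> = pdelta G D \<one>\<^bsub>G\<^esub>
    \<and> pdelta G D \<in> hom G (Lip_monoid G D T)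
    \<and> inj_on (pdelta G D) (carrier G)"
proof -
  interpret invariant_pm_group_convolution G T D
  proof (intro invariant_pm_group_convolution.intro sup_continuous_triangle.intro
      invariant_pm_group_convolution_axioms.intro)
    show "group G" "triangle_function T"
      using assms(1) by (simp_all add: invariant_pm_group_def pm_space_def)
  qed (fact assms)+
  show ?thesis
    using pconv_Lip1 monoid_Lip_monoid pdelta_hom inj_on_pdelta by (simp add: Lip_monoid_def)
qed

end
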